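(* Let $\theta\in\,]0,1[$ be fixed and, for $n\in\mathbb{N}$, let $m=\lfloor\theta n\rfloor$ (with $m\ge1$). There exist constants $\mathcal{C}_1,\mathcal{C}_2>0$ independent of $n,m,x$ such that $$\mathcal{C}_1\lambda_n^m(x)\le\tilde\lambda_n^m(x)\le\mathcal{C}_2\lambda_n^m(x),\qquad |x|\le1,$$ where $\lambda_n^m(x)=\int_{-1}^1|s_n^m(x,y)|w(y)\,dy$ and $\tilde\lambda_n^m(x)=\frac{\pi}{n}\sum_{i=1}^n|s_n^m(x_i^n,x)|$.
   Context: Let $w(x)=(1-x^2)^{-1/2}$ on $[-1,1]$. The orthonormal Chebyshev polynomials are $p_0=\sqrt{1/\pi}$, $p_r(x)=\sqrt{2/\pi}\cos(r\arccos x)$, $r\ge1$; Chebyshev nodes $x_k^n=\cos\frac{(2k-1)\pi}{2n}$, $k=1,\ldots,n$. For $0<m<n$: $\mu_{n,r}^m=1$ if $0\le r\le n-m$, $\frac{m+n-r}{2m}$ if $n-m<r<n+m$, $0$ otherwise; for $r=0,\ldots,n-1$, $q_{n,r}^m=p_r$ if $r\le n-m$ and $q_{n,r}^m=\mu_{n,r}^mp_r-\mu_{n,2n-r}^mp_{2n-r}$ if $n-m<r<n$; $\nu_{n,r}^m=1$ if $r\le n-m$, $\frac{m^2+(n-r)^2}{2m^2}$ if $n-m<r<n$. Orthonormal VP scaling functions: $\tilde\varphi_{n,k}^m=\sum_{r=0}^{n-1}\sqrt{\frac{\pi}{n\nu_{n,r}^m}}p_r(x_k^n)q_{n,r}^m$,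 and $s_n^m(x,y)=\sum_{k=1}^n\tilde\varphi_{n,k}^m(x)\tilde\varphi_{n,k}^m(y)$ (equivalently $\sum_{r=0}^{n-1}q_{n,r}^m(x)q_{n,r}^m(y)/\nu_{n,r}^m$). *)

theory Defs
  imports "HOL-Analysis.Analysis"
begin

definition cheb_w :: "real \<Rightarrow> real" where
  "cheb_w y = 1 / sqrt (1 - y^2)"

definition cheb_p :: "nat \<Rightarrow> real \<Rightarrow> real" where
  "cheb_p r x = (if r = 0 then sqrt (1/pi) else sqrt (2/pi) * cos (real r * arccos x))"

definition cheb_node :: "nat \<Rightarrow> nat \<Rightarrow> real" where
  "cheb_node n k = cos ((2 * real k - 1) * pi / (2 * real n))"

definition vp_mu :: "nat \<Rightarrow> nat \<Rightarrow> nat \<Rightarrow> real" where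
  "vp_mu n m r = (if r \<le> n - m then 1
                  else if n - m < r \<and> r < n + m then (real m + real n - real r) / (2 * real m)
                  else 0)"

definition vp_q :: "nat \<Rightarrow> nat \<Rightarrow> nat \<Rightarrow> real \<Rightarrow> real" where
  "vp_q n m r x = (if r \<le> n - m then cheb_p r x
                   else vp_mu n m r * cheb_p r x - vp_mu n m (2*n - r) * cheb_p (2*n - r) x)"

definition vp_nu :: "nat \<Rightarrow> nat \<Rightarrow> nat \<Rightarrow> real" where
  "vp_nu n m r = (if r \<le> n - m then 1
                  else (real m ^ 2 + (real n - real r) ^ 2) / (2 * real m ^ 2))"

definition vp_phi :: "nat \<Rightarrow> nat \<Rightarrow> nat \<Rightarrow> real \<Rightarrow> real" where
  "vp_phi n m k x = (\<Sum>r<n. sqrt (pi / (real n * vp_nu n m r)) * cheb_p r (cheb_node n k) * vp_q n m r x)"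

definition vp_s :: "nat \<Rightarrow> nat \<Rightarrow> real \<Rightarrow> real \<Rightarrow> real" where
  "vp_s n m x y = (\<Sum>k=1..n. vp_phi n m k x * vp_phi n m k y)"

definition vp_lambda :: "nat \<Rightarrow> nat \<Rightarrow> real \<Rightarrow> real" where
  "vp_lambda n m x = integral {-1..1} (\<lambda>y. \<bar>vp_s n m x y\<bar> * cheb_w y)"

definition vp_lambda_tilde :: "nat \<Rightarrow> nat \<Rightarrow> real \<Rightarrow> real" where
  "vp_lambda_tilde n m x = pi / real n * (\<Sum>i=1..n. \<bar>vp_s n m (cheb_node n i) x\<bar>)"

end

theory Submission
  imports Defs
begin

text \<open>
  Substituting y = cos u turns both quantities into statements about the function
  u \<mapsto> s(x, cos u) on [0, pi]. Discrete orthogonality at the Chebyshev nodes shows that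
  this function is the de la Vallee Poussin interpolant (1/n) sum_k s(x, x_k) V(u, t_k) of
  its own values at the Chebyshev angles t_k, where V = (L F_L - K F_K) / (L - K) with
  K = n - m, L = n + m and Fejer kernels F. Fejer kernels are nonnegative with mean one,
  both as integrals over [0, pi] and as sums over the n Chebyshev angles, so |V| has
  integral at most pi (L + K) / (L - K) and sum at most n (L + K) / (L - K). The integral
  bound gives vp_lambda \<le> (n / m) vp_lambda_tilde. Conversely, s(x, cos u) is a cosine
  polynomial of degree below n + m and is therefore reproduced by the kernel V with
  K = n + m, L = 2 n; the sum bound then gives
  vp_lambda_tilde \<le> (3 n + m) / (n - m) vp_lambda. For m = \<lfloor>\<theta> n\<rfloor> both ratios are
  bounded in terms of \<theta>.
\<close>

section \<open>Cosine kernels on [0, pi]\<close>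

definition neumann_factor :: "nat \<Rightarrow> real" where
  "neumann_factor r = (if r = 0 then 1 else 2)"

text \<open>Integrating a cosine polynomial on [0, pi] against \<open>cos_kernel c L\<close> multiplies
  its r-th coefficient by c r, for r < L.\<close>
definition cos_kernel :: "(nat \<Rightarrow> real) \<Rightarrow> nat \<Rightarrow> real \<Rightarrow> real \<Rightarrow> real" where
  "cos_kernel c L u a = (\<Sum>r<L. c r * neumann_factor r * cos (real r * u) * cos (real r * a))"

lemma has_integral_cos_int_mult:
  fixes k :: int
  shows "((\<lambda>u. cos (of_int k * u)) has_integral (if k = 0 then pi else 0)) {0..pi}"
proof (cases "k = 0")
  case True
  then show ?thesis using has_integral_const_real[of "1::real" 0 pi] by simp
next
  case False
  have "((\<lambda>u. cos (of_int k * u)) has_integral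
          (sin (of_int k * pi) / of_int k - sin (of_int k * 0) / of_int k)) {0..pi}"
    by (intro fundamental_theorem_of_calculus has_real_derivative_iff_has_vector_derivative[THEN iffD1])
       (use False in \<open>auto intro!: derivative_eq_intros\<close>)
  moreover have "sin (of_int k * pi) = 0"
    by (metis mult.commute sin_npi_int)
  ultimately show ?thesis using False by simp
qed

lemma has_integral_cos_nat_mult:
  "((\<lambda>u. cos (real j * u)) has_integral (if j = 0 then pi else 0)) {0..pi}"
  using has_integral_cos_int_mult[of "int j"] by simp

lemma has_integral_cos_mult_cos:
  "((\<lambda>u. cos (real j * u) * cos (real r * u)) has_integral
      (if j = r then pi / neumann_factor r else 0)) {0..pi}"
proof -
  have prod: "cos (real j * u) * cos (real r * u) =
     (cos (of_int (int j + int r) * u) + cos (of_int (int j - int r) * u)) / 2" for u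
    by (simp add: cos_add cos_diff algebra_simps)
  have "((\<lambda>u. (cos (of_int (int j + int r) * u) + cos (of_int (int j - int r) * u)) / 2)
     has_integral ((if int j + int r = 0 then pi else 0) + (if int j - int r = 0 then pi else 0)) / 2) {0..pi}"
    by (intro has_integral_divide has_integral_add has_integral_cos_int_mult)
  then show ?thesis
    unfolding prod by (auto simp: neumann_factor_def)
qed

lemma cos_kernel_cong:
  "(\<And>r. r < L \<Longrightarrow> c r = d r) \<Longrightarrow> cos_kernel c L u a = cos_kernel d L u a"
  unfolding cos_kernel_def by (intro sum.cong) auto

lemma continuous_on_cos_kernel: "continuous_on S (\<lambda>u. cos_kernel c L u a)"
  unfolding cos_kernel_def by (intro continuous_intros)

lemma cos_kernel_has_integral:
  assumes "0 < L"
  shows "((\<lambda>u. cos_kernel c L u a) has_integral (pi * c 0)) {0..pi}"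
proof -
  have "((\<lambda>u. \<Sum>r<L. (c r * neumann_factor r * cos (real r * a)) * cos (real r * u)) has_integral
      (\<Sum>r<L. (c r * neumann_factor r * cos (real r * a)) * (if r = 0 then pi else 0))) {0..pi}"
    by (intro has_integral_sum has_integral_mult_right has_integral_cos_nat_mult) auto
  moreover have "(\<Sum>r<L. (c r * neumann_factor r * cos (real r * a)) * (if r = 0 then pi else 0)) = pi * c 0"
    using assms by (simp add: if_distrib sum.delta neumann_factor_def cong: if_cong)
  ultimately show ?thesis unfolding cos_kernel_def by (simp add: algebra_simps)
qed

lemma cos_kernel_reproduces:
  assumes "D \<le> L" "\<And>r. r < D \<Longrightarrow> c r = 1"
  shows "((\<lambda>u. (\<Sum>j<D. b j * cos (real j * u)) * cos_kernel c L u a) has_integral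
          (pi * (\<Sum>j<D. b j * cos (real j * a)))) {0..pi}"
proof -
  let ?w = "\<lambda>j r. b j * c r * neumann_factor r * cos (real r * a)"
  have expand: "(\<Sum>j<D. b j * cos (real j * u)) * cos_kernel c L u a =
     (\<Sum>j<D. \<Sum>r<L. ?w j r * (cos (real j * u) * cos (real r * u)))" for u
    unfolding cos_kernel_def sum_product by (intro sum.cong refl) (simp add: algebra_simps)
  have "((\<lambda>u. \<Sum>j<D. \<Sum>r<L. ?w j r * (cos (real j * u) * cos (real r * u))) has_integral
     (\<Sum>j<D. \<Sum>r<L. ?w j r * (if j = r then pi / neumann_factor r else 0))) {0..pi}"
    by (intro has_integral_sum has_integral_mult_right has_integral_cos_mult_cos) auto
  moreover have "(\<Sum>r<L. ?w j r * (if j = r then pi / neumann_factor r else 0)) = pi * (b j * cos (real j * a))"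
    if "j < D" for j
  proof -
    have "(\<Sum>r<L. ?w j r * (if j = r then pi / neumann_factor r else 0)) = ?w j j * (pi / neumann_factor j)"
      using that assms(1) by (simp add: if_distrib[of "\<lambda>t. _ * t"] sum.delta cong: if_cong)
    then show ?thesis using assms(2)[OF that] by (simp add: neumann_factor_def)
  qed
  ultimately show ?thesis unfolding expand by (simp add: sum_distrib_left)
qed

lemma sum_cos_kernel_eq_cos_poly:
  "(\<Sum>j\<in>J. c j * cos_kernel d L u (a j)) =
     (\<Sum>r<L. (\<Sum>j\<in>J. c j * d r * neumann_factor r * cos (real r * a j)) * cos (real r * u))"
  unfolding cos_kernel_def sum_distrib_left sum_distrib_right
  by (subst sum.swap) (simp add: mult_ac)

section \<open>Sums over the Chebyshev angles\<close>

definition cheb_angle :: "nat \<Rightarrow> nat \<Rightarrow> real" where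
  "cheb_angle n k = (2 * real k - 1) * pi / (2 * real n)"

lemma sum_sin_cos_odd_multiples:
  "(\<Sum>k=1..N. 2 * sin t * cos ((2 * real k - 1) * t)) = sin (2 * real N * t)"
proof (induction N)
  case (Suc N)
  have "2 * sin t * cos ((2 * real (Suc N) - 1) * t) = sin (2 * real (Suc N) * t) - sin (2 * real N * t)"
  proof -
    have "2 * real (Suc N) * t = (2 * real (Suc N) - 1) * t + t"
      and "2 * real N * t = (2 * real (Suc N) - 1) * t - t" by (simp_all add: algebra_simps)
    then show ?thesis by (simp only: sin_add sin_diff) (simp add: algebra_simps)
  qed
  then show ?case using Suc by simp
qed simp

lemma cheb_angle_bounds:
  assumes "1 \<le> k" "k \<le> n"
  shows "0 < cheb_angle n k" "cheb_angle n k < pi"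
proof -
  have k: "0 < 2 * real k - 1" "2 * real k - 1 < 2 * real n" using assms by auto
  then show "0 < cheb_angle n k" unfolding cheb_angle_def by simp
  have "(2 * real k - 1) * pi < (2 * real n) * pi" using k by simp
  then show "cheb_angle n k < pi" unfolding cheb_angle_def using k by (simp add: divide_less_eq)
qed

lemma sum_cos_cheb_angle:
  assumes "j < 2 * n"
  shows "(\<Sum>k=1..n. cos (real j * cheb_angle n k)) = (if j = 0 then real n else 0)"
proof (cases "j = 0")
  case False
  define t where "t = real j * pi / (2 * real n)"
  have angle: "real j * cheb_angle n k = (2 * real k - 1) * t" for k
    unfolding cheb_angle_def t_def by (simp add: field_simps)
  have "0 < t" "t < pi" unfolding t_def using assms False by (simp_all add: field_simps)
  then have "sin t \<noteq> 0" using sin_gt_zero by force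
  moreover have "2 * sin t * (\<Sum>k=1..n. cos (real j * cheb_angle n k)) = sin (real j * pi)"
    unfolding angle sum_distrib_left sum_sin_cos_odd_multiples using assms
    by (simp add: t_def)
  ultimately show ?thesis using False by simp
qed simp

lemma sum_cos_mult_cos_cheb_angle:
  assumes "r < n" "r' < n"
  shows "(\<Sum>k=1..n. cos (real r * cheb_angle n k) * cos (real r' * cheb_angle n k)) =
     (if r = r' then real n / neumann_factor r else 0)"
proof -
  define d where "d = (if r' \<le> r then r - r' else r' - r)"
  have prod: "cos (real r * t) * cos (real r' * t) = (cos (real (r + r') * t) + cos (real d * t)) / 2" for t
  proof -
    have "cos (real d * t) = cos (real r * t - real r' * t)"
      unfolding d_def by (cases "r' \<le> r") (auto simp: of_nat_diff left_diff_distrib cos_diff)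
    then show ?thesis by (simp add: cos_diff cos_add distrib_right)
  qed
  have "r + r' < 2 * n" "d < 2 * n" using assms by (auto simp: d_def)
  then show ?thesis
    unfolding prod sum_divide_distrib[symmetric] sum.distrib
    by (simp only: sum_cos_cheb_angle) (auto simp: d_def neumann_factor_def)
qed

lemma sum_cos_kernel_cheb_angle:
  assumes "L \<le> 2 * n" "0 < L"
  shows "(\<Sum>k=1..n. cos_kernel c L u (cheb_angle n k)) = real n * c 0"
proof -
  have "(\<Sum>k=1..n. cos_kernel c L u (cheb_angle n k)) =
      (\<Sum>r<L. c r * neumann_factor r * cos (real r * u) * (\<Sum>k=1..n. cos (real r * cheb_angle n k)))"
    unfolding cos_kernel_def sum_distrib_left by (subst sum.swap) (simp add: algebra_simps)
  also have "\<dots> = (\<Sum>r<L. if r = 0 then real n * c 0 else 0)"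
  proof (intro sum.cong refl)
    fix r assume "r \<in> {..<L}"
    then have "r < 2 * n" using assms by simp
    then show "c r * neumann_factor r * cos (real r * u) * (\<Sum>k=1..n. cos (real r * cheb_angle n k)) =
        (if r = 0 then real n * c 0 else 0)"
      unfolding sum_cos_cheb_angle[OF \<open>r < 2 * n\<close>] by (simp add: neumann_factor_def)
  qed
  finally show ?thesis using assms by simp
qed

section \<open>Fejer and de la Vallee Poussin kernels\<close>

definition fejer_coeff :: "nat \<Rightarrow> nat \<Rightarrow> real" where
  "fejer_coeff K r = max 0 (1 - real r / real K)"

definition fejer_kernel :: "nat \<Rightarrow> real \<Rightarrow> real \<Rightarrow> real" where
  "fejer_kernel K = cos_kernel (fejer_coeff K) K"

lemma sum_neumann_factor_cos:
  "(\<Sum>r<Suc K. neumann_factor r * cos (real r * t)) = 1 + 2 * (\<Sum>k<K. cos (real (K - k) * t))"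
proof -
  have "(\<Sum>k<K. cos (real (K - k) * t)) = (\<Sum>k<K. cos (real (Suc (K - Suc k)) * t))"
    by (intro sum.cong refl) (simp add: Suc_diff_Suc)
  also have "\<dots> = (\<Sum>i<K. cos (real (Suc i) * t))"
    using sum.nat_diff_reindex[of "\<lambda>i. cos (real (Suc i) * t)" K] by simp
  finally have reindex: "(\<Sum>k<K. cos (real (K - k) * t)) = (\<Sum>i<K. cos (real (Suc i) * t))" .
  show ?thesis
    unfolding reindex sum.lessThan_Suc_shift by (simp add: neumann_factor_def sum_distrib_left)
qed

lemma fejer_sum_of_squares:
  "(\<Sum>k<K. cos (real k * t))\<^sup>2 + (\<Sum>k<K. sin (real k * t))\<^sup>2 =
     (\<Sum>r<K. (real K - real r) * neumann_factor r * cos (real r * t))"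
proof (induction K)
  case (Suc K)
  define C where "C = (\<Sum>k<K. cos (real k * t))"
  define S where "S = (\<Sum>k<K. sin (real k * t))"
  have cross: "C * cos (real K * t) + S * sin (real K * t) = (\<Sum>k<K. cos (real (K - k) * t))"
    unfolding C_def S_def sum_distrib_right sum.distrib[symmetric]
    by (intro sum.cong refl) (simp add: of_nat_diff cos_diff left_diff_distrib)
  have "(\<Sum>k<Suc K. cos (real k * t))\<^sup>2 + (\<Sum>k<Suc K. sin (real k * t))\<^sup>2
      = (C\<^sup>2 + S\<^sup>2) + 2 * (C * cos (real K * t) + S * sin (real K * t))
        + ((sin (real K * t))\<^sup>2 + (cos (real K * t))\<^sup>2)"
    by (simp add: C_def S_def power2_eq_square algebra_simps)
  also have "\<dots> = (\<Sum>r<K. (real K - real r) * neumann_factor r * cos (real r * t))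
                  + (\<Sum>r<Suc K. neumann_factor r * cos (real r * t))"
    unfolding cross sum_neumann_factor_cos using Suc by (simp add: C_def S_def)
  also have "\<dots> = (\<Sum>r<Suc K. (real (Suc K) - real r) * neumann_factor r * cos (real r * t))"
    by (simp add: sum.distrib[symmetric] algebra_simps)
  finally show ?case .
qed simp

lemma fejer_coeff_0 [simp]: "fejer_coeff K 0 = 1"
  by (simp add: fejer_coeff_def)

lemma fejer_coeff_eq:
  "0 < K \<Longrightarrow> fejer_coeff K r = (if r < K then (real K - real r) / real K else 0)"
  by (simp add: fejer_coeff_def field_simps)

lemma cos_kernel_fejer_coeff:
  assumes "0 < K" "K \<le> L"
  shows "cos_kernel (fejer_coeff K) L u a = fejer_kernel K u a"
  unfolding fejer_kernel_def cos_kernel_def using assms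
  by (intro sum.mono_neutral_right) (auto simp: fejer_coeff_eq)

lemma fejer_kernel_nonneg:
  assumes "0 < K"
  shows "0 \<le> fejer_kernel K u a"
proof -
  define F where "F t = (\<Sum>r<K. (real K - real r) * neumann_factor r * cos (real r * t))" for t
  have F_nonneg: "0 \<le> F t" for t
    unfolding F_def fejer_sum_of_squares[symmetric] by simp
  have "fejer_kernel K u a = (F (u - a) + F (u + a)) / (2 * real K)"
    unfolding F_def fejer_kernel_def cos_kernel_def sum.distrib[symmetric] sum_divide_distrib
  proof (intro sum.cong refl)
    fix r assume "r \<in> {..<K}"
    then have coeff: "fejer_coeff K r = (real K - real r) / real K"
      using assms by (simp add: fejer_coeff_eq)
    have sum_cos: "cos (real r * (u - a)) + cos (real r * (u + a)) = 2 * cos (real r * u) * cos (real r * a)"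
      by (simp add: right_diff_distrib distrib_left cos_diff cos_add)
    have "((real K - real r) * neumann_factor r * cos (real r * (u - a))
        + (real K - real r) * neumann_factor r * cos (real r * (u + a))) / (2 * real K)
      = (real K - real r) / real K * neumann_factor r
          * ((cos (real r * (u - a)) + cos (real r * (u + a))) / 2)"
      using assms by (simp add: field_simps)
    then show "fejer_coeff K r * neumann_factor r * cos (real r * u) * cos (real r * a) =
      ((real K - real r) * neumann_factor r * cos (real r * (u - a))
        + (real K - real r) * neumann_factor r * cos (real r * (u + a))) / (2 * real K)"
      unfolding coeff sum_cos by simp
  qed
  then show ?thesis using F_nonneg[of "u - a"] F_nonneg[of "u + a"] by simp
qed

lemma fejer_kernel_has_integral:
  "0 < K \<Longrightarrow> ((\<lambda>u. fejer_kernel K u a) has_integral pi) {0..pi}"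
  using cos_kernel_has_integral[of K "fejer_coeff K"] by (simp add: fejer_kernel_def)

lemma sum_fejer_kernel_cheb_angle:
  "0 < K \<Longrightarrow> K \<le> 2 * n \<Longrightarrow> (\<Sum>k=1..n. fejer_kernel K u (cheb_angle n k)) = real n"
  using sum_cos_kernel_cheb_angle[of K n "fejer_coeff K"] by (simp add: fejer_kernel_def)

text \<open>The multipliers equal 1 up to degree K and decrease linearly to 0 at degree L.\<close>
definition vallee_poussin_coeff :: "nat \<Rightarrow> nat \<Rightarrow> nat \<Rightarrow> real" where
  "vallee_poussin_coeff K L r =
     (real L * fejer_coeff L r - real K * fejer_coeff K r) / (real L - real K)"

definition vallee_poussin_kernel :: "nat \<Rightarrow> nat \<Rightarrow> real \<Rightarrow> real \<Rightarrow> real" where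
  "vallee_poussin_kernel K L = cos_kernel (vallee_poussin_coeff K L) L"

lemma vallee_poussin_coeff_eq_1:
  assumes "0 < K" "K < L" "r \<le> K"
  shows "vallee_poussin_coeff K L r = 1"
proof -
  have "real L * fejer_coeff L r - real K * fejer_coeff K r = real L - real K"
    using assms by (auto simp: fejer_coeff_eq)
  then show ?thesis using assms(2) by (simp add: vallee_poussin_coeff_def)
qed

lemma vallee_poussin_kernel_eq:
  assumes "0 < K" "K < L"
  shows "vallee_poussin_kernel K L u a =
           (real L * fejer_kernel L u a - real K * fejer_kernel K u a) / (real L - real K)"
proof -
  have "vallee_poussin_kernel K L u a =
      (real L * cos_kernel (fejer_coeff L) L u a - real K * cos_kernel (fejer_coeff K) L u a) / (real L - real K)"
    unfolding vallee_poussin_kernel_def cos_kernel_def vallee_poussin_coeff_def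
      sum_distrib_left sum_subtractf[symmetric] sum_divide_distrib
    by (intro sum.cong refl) (simp add: algebra_simps diff_divide_distrib)
  then show ?thesis using assms by (simp add: cos_kernel_fejer_coeff)
qed

lemma abs_vallee_poussin_kernel_le:
  assumes "0 < K" "K < L"
  shows "\<bar>vallee_poussin_kernel K L u a\<bar> \<le>
           (real L * fejer_kernel L u a + real K * fejer_kernel K u a) / (real L - real K)"
proof -
  have "0 \<le> fejer_kernel L u a" "0 \<le> fejer_kernel K u a"
    using assms by (simp_all add: fejer_kernel_nonneg)
  then show ?thesis
    using assms by (simp add: vallee_poussin_kernel_eq abs_le_iff divide_right_mono)
qed

lemma continuous_on_vallee_poussin_kernel: "continuous_on S (\<lambda>u. vallee_poussin_kernel K L u a)"
  unfolding vallee_poussin_kernel_def by (rule continuous_on_cos_kernel)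

lemma integral_abs_vallee_poussin_kernel_le:
  assumes "0 < K" "K < L"
  shows "integral {0..pi} (\<lambda>u. \<bar>vallee_poussin_kernel K L u a\<bar>) \<le>
           pi * (real L + real K) / (real L - real K)"
proof -
  have majorant: "((\<lambda>u. (real L * fejer_kernel L u a + real K * fejer_kernel K u a) / (real L - real K))
      has_integral (real L * pi + real K * pi) / (real L - real K)) {0..pi}"
    using assms by (intro has_integral_divide has_integral_add has_integral_mult_right fejer_kernel_has_integral) auto
  have "(\<lambda>u. \<bar>vallee_poussin_kernel K L u a\<bar>) integrable_on {0..pi}"
    by (intro integrable_continuous_interval continuous_on_rabs continuous_on_vallee_poussin_kernel)
  then have "integral {0..pi} (\<lambda>u. \<bar>vallee_poussin_kernel K L u a\<bar>) \<le> (real L * pi + real K * pi) / (real L - real K)"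
    by (rule has_integral_le[OF integrable_integral majorant]) (simp add: abs_vallee_poussin_kernel_le assms)
  then show ?thesis by (simp add: algebra_simps)
qed

lemma sum_abs_vallee_poussin_kernel_cheb_angle_le:
  assumes "0 < K" "K < L" "L \<le> 2 * n"
  shows "(\<Sum>k=1..n. \<bar>vallee_poussin_kernel K L u (cheb_angle n k)\<bar>) \<le>
           real n * (real L + real K) / (real L - real K)"
proof -
  have "(\<Sum>k=1..n. \<bar>vallee_poussin_kernel K L u (cheb_angle n k)\<bar>) \<le>
      (\<Sum>k=1..n. (real L * fejer_kernel L u (cheb_angle n k) + real K * fejer_kernel K u (cheb_angle n k))
                  / (real L - real K))"
    by (intro sum_mono abs_vallee_poussin_kernel_le assms)
  also have "\<dots> = (real L * real n + real K * real n) / (real L - real K)"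
  proof -
    have "(\<Sum>k=1..n. fejer_kernel L u (cheb_angle n k)) = real n"
         "(\<Sum>k=1..n. fejer_kernel K u (cheb_angle n k)) = real n"
      by (rule sum_fejer_kernel_cheb_angle; use assms in simp)+
    then show ?thesis
      by (simp only: sum_divide_distrib[symmetric] sum.distrib sum_distrib_left[symmetric])
  qed
  finally show ?thesis by (simp add: algebra_simps)
qed

lemma integral_abs_sum_vallee_poussin_kernel_le:
  assumes "0 < K" "K < L" "finite J"
  shows "integral {0..pi} (\<lambda>u. \<bar>\<Sum>j\<in>J. c j * vallee_poussin_kernel K L u (a j)\<bar>) \<le>
           pi * (real L + real K) / (real L - real K) * (\<Sum>j\<in>J. \<bar>c j\<bar>)"
proof -
  have int: "(\<lambda>u. \<bar>c j\<bar> * \<bar>vallee_poussin_kernel K L u (a j)\<bar>) integrable_on {0..pi}" for j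
    by (intro integrable_continuous_interval continuous_intros continuous_on_vallee_poussin_kernel)
  have "integral {0..pi} (\<lambda>u. \<bar>\<Sum>j\<in>J. c j * vallee_poussin_kernel K L u (a j)\<bar>) \<le>
      integral {0..pi} (\<lambda>u. \<Sum>j\<in>J. \<bar>c j\<bar> * \<bar>vallee_poussin_kernel K L u (a j)\<bar>)"
    by (intro integral_le integrable_continuous_interval continuous_intros continuous_on_vallee_poussin_kernel)
       (auto intro: order_trans[OF sum_abs] simp: abs_mult)
  also have "\<dots> = (\<Sum>j\<in>J. \<bar>c j\<bar> * integral {0..pi} (\<lambda>u. \<bar>vallee_poussin_kernel K L u (a j)\<bar>))"
    using int assms(3) by (simp add: integral_sum)
  also have "\<dots> \<le> (\<Sum>j\<in>J. \<bar>c j\<bar> * (pi * (real L + real K) / (real L - real K)))"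
    by (intro sum_mono mult_left_mono integral_abs_vallee_poussin_kernel_le assms) auto
  also have "\<dots> = pi * (real L + real K) / (real L - real K) * (\<Sum>j\<in>J. \<bar>c j\<bar>)"
    by (simp add: sum_distrib_right sum_divide_distrib mult.commute)
  finally show ?thesis .
qed

lemma sum_abs_cos_poly_cheb_angle_le:
  fixes b :: "nat \<Rightarrow> real"
  assumes "D \<le> K" "0 < K" "K < L" "L \<le> 2 * n"
  defines "P \<equiv> \<lambda>u. \<Sum>r<D. b r * cos (real r * u)"
  shows "pi * (\<Sum>k=1..n. \<bar>P (cheb_angle n k)\<bar>) \<le>
           real n * (real L + real K) / (real L - real K) * integral {0..pi} (\<lambda>u. \<bar>P u\<bar>)"
proof -
  have cont_P: "continuous_on {0..pi} P" unfolding P_def by (intro continuous_intros)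
  have pointwise: "pi * \<bar>P t\<bar> \<le> integral {0..pi} (\<lambda>u. \<bar>P u\<bar> * \<bar>vallee_poussin_kernel K L u t\<bar>)" for t
  proof -
    have "((\<lambda>u. P u * vallee_poussin_kernel K L u t) has_integral (pi * P t)) {0..pi}"
      unfolding P_def vallee_poussin_kernel_def
      using assms by (intro cos_kernel_reproduces) (auto intro: vallee_poussin_coeff_eq_1)
    then have "pi * \<bar>P t\<bar> = norm (integral {0..pi} (\<lambda>u. P u * vallee_poussin_kernel K L u t))"
      by (simp add: integral_unique abs_mult)
    also have "\<dots> \<le> integral {0..pi} (\<lambda>u. \<bar>P u\<bar> * \<bar>vallee_poussin_kernel K L u t\<bar>)"
      by (intro integral_norm_bound_integral integrable_continuous_interval continuous_intros
            cont_P continuous_on_vallee_poussin_kernel) (simp_all add: abs_mult)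
    finally show ?thesis .
  qed
  have "pi * (\<Sum>k=1..n. \<bar>P (cheb_angle n k)\<bar>) \<le>
      (\<Sum>k=1..n. integral {0..pi} (\<lambda>u. \<bar>P u\<bar> * \<bar>vallee_poussin_kernel K L u (cheb_angle n k)\<bar>))"
    unfolding sum_distrib_left by (intro sum_mono pointwise)
  also have "\<dots> = integral {0..pi} (\<lambda>u. \<bar>P u\<bar> * (\<Sum>k=1..n. \<bar>vallee_poussin_kernel K L u (cheb_angle n k)\<bar>))"
    unfolding sum_distrib_left
    by (intro integral_sum[symmetric] integrable_continuous_interval continuous_intros
          cont_P continuous_on_vallee_poussin_kernel) simp
  also have "\<dots> \<le> integral {0..pi} (\<lambda>u. \<bar>P u\<bar> * (real n * (real L + real K) / (real L - real K)))"
    by (intro integral_le integrable_continuous_interval continuous_intros cont_P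
          continuous_on_vallee_poussin_kernel mult_left_mono sum_abs_vallee_poussin_kernel_cheb_angle_le assms)
       simp
  finally show ?thesis by (simp add: mult.commute)
qed

section \<open>Chebyshev polynomials at the Chebyshev nodes\<close>

lemma cheb_node_eq_cos: "cheb_node n k = cos (cheb_angle n k)"
  by (simp add: cheb_node_def cheb_angle_def)

lemma cheb_p_cos:
  assumes "0 \<le> u" "u \<le> pi"
  shows "cheb_p r (cos u) = (if r = 0 then sqrt (1 / pi) else sqrt (2 / pi)) * cos (real r * u)"
  using assms by (simp add: cheb_p_def arccos_cos)

lemma cheb_p_cos_mult_cheb_p_cos:
  assumes "0 \<le> u" "u \<le> pi" "0 \<le> a" "a \<le> pi"
  shows "cheb_p r (cos u) * cheb_p r (cos a) = neumann_factor r / pi * (cos (real r * u) * cos (real r * a))"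
proof -
  have "(if r = 0 then sqrt (1 / pi) else sqrt (2 / pi)) * (if r = 0 then sqrt (1 / pi) else sqrt (2 / pi))
      = neumann_factor r / pi"
    by (simp add: neumann_factor_def)
  then show ?thesis
    unfolding cheb_p_cos[OF assms(1,2)] cheb_p_cos[OF assms(3,4)] by (simp only: mult_ac)
qed

lemma cheb_p_reflect_cheb_node:
  assumes "1 \<le> k" "k \<le> n" "0 < r" "r < 2 * n"
  shows "cheb_p (2 * n - r) (cheb_node n k) = - cheb_p r (cheb_node n k)"
proof -
  have odd_multiple: "real (2 * k - 1) = 2 * real k - 1" "odd (2 * k - 1)"
    using assms by (auto simp: of_nat_diff)
  have "cos ((2 * real k - 1) * pi) = -1" "sin ((2 * real k - 1) * pi) = 0"
    using cos_npi[of "2 * k - 1"] sin_npi[of "2 * k - 1"] odd_multiple(2)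
    unfolding odd_multiple(1) by (simp_all add: minus_one_power_iff)
  moreover have "real (2 * n - r) * cheb_angle n k = (2 * real k - 1) * pi - real r * cheb_angle n k"
    using assms by (simp add: cheb_angle_def of_nat_diff field_simps)
  ultimately have "cos (real (2 * n - r) * cheb_angle n k) = - cos (real r * cheb_angle n k)"
    by (simp add: cos_diff)
  then show ?thesis
    using assms cheb_angle_bounds[OF assms(1,2)] by (simp add: cheb_node_eq_cos cheb_p_cos)
qed

lemma cheb_p_cheb_node_self:
  assumes "1 \<le> k" "k \<le> n"
  shows "cheb_p n (cheb_node n k) = 0"
proof -
  have "real n * cheb_angle n k = real k * pi - pi / 2"
    using assms by (simp add: cheb_angle_def field_simps)
  then have "cos (real n * cheb_angle n k) = 0"
    by (simp add: cos_diff)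
  then show ?thesis
    using cheb_angle_bounds[OF assms] by (simp add: cheb_node_eq_cos cheb_p_cos)
qed

lemma sum_cheb_p_mult_cheb_p_cheb_node:
  assumes "r < n" "r' < n"
  shows "(\<Sum>k=1..n. cheb_p r (cheb_node n k) * cheb_p r' (cheb_node n k)) =
           (if r = r' then real n / pi else 0)"
proof -
  have "cheb_p r (cheb_node n k) * cheb_p r' (cheb_node n k) =
      (if r = 0 then sqrt (1 / pi) else sqrt (2 / pi)) * (if r' = 0 then sqrt (1 / pi) else sqrt (2 / pi))
      * (cos (real r * cheb_angle n k) * cos (real r' * cheb_angle n k))" if "k \<in> {1..n}" for k
    using cheb_angle_bounds[of k n] that by (simp add: cheb_node_eq_cos cheb_p_cos)
  then have "(\<Sum>k=1..n. cheb_p r (cheb_node n k) * cheb_p r' (cheb_node n k)) =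
      (if r = 0 then sqrt (1 / pi) else sqrt (2 / pi)) * (if r' = 0 then sqrt (1 / pi) else sqrt (2 / pi))
      * (if r = r' then real n / neumann_factor r else 0)"
    by (simp add: sum_distrib_left[symmetric] sum_cos_mult_cos_cheb_angle[OF assms, symmetric])
  then show ?thesis
    by (simp add: neumann_factor_def real_sqrt_mult[symmetric])
qed

lemma vp_mu_add_vp_mu_reflect:
  assumes "n - m < r" "r < n"
  shows "vp_mu n m r + vp_mu n m (2 * n - r) = 1"
proof -
  have cases: "\<not> r \<le> n - m" "r < n + m" "\<not> 2 * n - r \<le> n - m" "2 * n - r < n + m" "0 < m"
    using assms by auto
  have "real (2 * n - r) = 2 * real n - real r" using assms by (simp add: of_nat_diff)
  then show ?thesis using cases by (simp add: vp_mu_def field_simps)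
qed

lemma vp_q_cheb_node:
  assumes "1 \<le> k" "k \<le> n" "r < n"
  shows "vp_q n m r (cheb_node n k) = cheb_p r (cheb_node n k)"
proof (cases "r \<le> n - m")
  case False
  then have "vp_q n m r (cheb_node n k) =
      (vp_mu n m r + vp_mu n m (2 * n - r)) * cheb_p r (cheb_node n k)"
    using assms cheb_p_reflect_cheb_node[OF assms(1,2), of r] by (simp add: vp_q_def algebra_simps)
  then show ?thesis using False assms vp_mu_add_vp_mu_reflect[of n m r] by simp
qed (simp add: vp_q_def)

lemma vp_mu_eq_vallee_poussin_coeff:
  assumes "0 < m" "m < n"
  shows "vp_mu n m r = vallee_poussin_coeff (n - m) (n + m) r"
proof -
  have diff: "real (n + m) - real (n - m) = 2 * real m" using assms by (simp add: of_nat_diff)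
  consider "r \<le> n - m" | "n - m < r" "r < n + m" | "n + m \<le> r" by linarith
  then show ?thesis
  proof cases
    case 1
    then show ?thesis using assms by (simp add: vp_mu_def vallee_poussin_coeff_eq_1)
  next
    case 2
    have "real (n + m) * fejer_coeff (n + m) r = real (n + m) - real r"
      using 2 assms by (simp add: fejer_coeff_eq)
    moreover have "fejer_coeff (n - m) r = 0"
      using 2 assms by (simp add: fejer_coeff_eq)
    ultimately show ?thesis
      using 2 unfolding vallee_poussin_coeff_def diff by (simp add: vp_mu_def algebra_simps)
  next
    case 3
    then show ?thesis using assms
      by (auto simp: vp_mu_def vallee_poussin_coeff_def fejer_coeff_eq)
  qed
qed

section \<open>Interpolation by the VP scaling functions\<close>

text \<open>At a node, aliasing turns the reflected part of each q_r into the degrees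
  n < r < n + m.\<close>
lemma sum_vp_q_mult_cheb_p_cheb_node:
  assumes "0 < m" "m < n" "1 \<le> k" "k \<le> n"
  defines "x \<equiv> cheb_node n k"
  shows "(\<Sum>r<n. vp_q n m r y * cheb_p r x) = (\<Sum>r<n + m. vp_mu n m r * cheb_p r y * cheb_p r x)"
proof -
  define g where "g r = vp_mu n m r * cheb_p r y * cheb_p r x" for r
  have reflect: "cheb_p (2 * n - r) x = - cheb_p r x" if "r \<in> {n - m<..<n}" for r
    unfolding x_def using that assms by (intro cheb_p_reflect_cheb_node) auto
  have "(\<Sum>r<n. vp_q n m r y * cheb_p r x) =
      (\<Sum>r<n. g r) + (\<Sum>r<n. if n - m < r then g (2 * n - r) else 0)"
    unfolding sum.distrib[symmetric]
  proof (intro sum.cong refl)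
    fix r assume "r \<in> {..<n}"
    then show "vp_q n m r y * cheb_p r x = g r + (if n - m < r then g (2 * n - r) else 0)"
      by (cases "n - m < r") (simp_all add: vp_q_def vp_mu_def g_def reflect left_diff_distrib)
  qed
  also have "(\<Sum>r<n. if n - m < r then g (2 * n - r) else 0) = (\<Sum>r\<in>{n - m<..<n}. g (2 * n - r))"
    by (simp add: sum.If_cases Int_def greaterThanLessThan_def lessThan_def conj_commute)
  also have "\<dots> = (\<Sum>r\<in>{n<..<n + m}. g r)"
    by (rule sum.reindex_bij_witness[of _ "\<lambda>r. 2 * n - r" "\<lambda>r. 2 * n - r"]) (use assms in auto)
  also have "\<dots> = (\<Sum>r\<in>{n..<n + m}. g r)"
    using assms cheb_p_cheb_node_self[OF assms(3,4)]
    by (simp add: g_def sum.atLeast_Suc_lessThan atLeastSucLessThan_greaterThanLessThan x_def)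
  also have "(\<Sum>r<n. g r) + \<dots> = (\<Sum>r<n + m. g r)"
    by (simp add: atLeast0LessThan[symmetric] sum.atLeastLessThan_concat)
  finally show ?thesis unfolding g_def .
qed

lemma vallee_poussin_kernel_cheb_node:
  assumes "0 < m" "m < n" "1 \<le> k" "k \<le> n" "0 \<le> u" "u \<le> pi"
  shows "vallee_poussin_kernel (n - m) (n + m) u (cheb_angle n k) =
           pi * (\<Sum>r<n. vp_q n m r (cos u) * cheb_p r (cheb_node n k))"
proof -
  have "vallee_poussin_kernel (n - m) (n + m) u (cheb_angle n k) = cos_kernel (vp_mu n m) (n + m) u (cheb_angle n k)"
    unfolding vallee_poussin_kernel_def using assms by (intro cos_kernel_cong) (simp add: vp_mu_eq_vallee_poussin_coeff)
  also have "\<dots> = pi * (\<Sum>r<n + m. vp_mu n m r * cheb_p r (cos u) * cheb_p r (cheb_node n k))"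
    unfolding cos_kernel_def sum_distrib_left cheb_node_eq_cos mult.assoc
      cheb_p_cos_mult_cheb_p_cos[OF assms(5,6) less_imp_le[OF cheb_angle_bounds(1)[OF assms(3,4)]]
                                   less_imp_le[OF cheb_angle_bounds(2)[OF assms(3,4)]]]
    by (simp add: algebra_simps)
  finally show ?thesis
    by (simp add: sum_vp_q_mult_cheb_p_cheb_node[OF assms(1-4)])
qed

lemma vp_q_cos_interpolation:
  assumes "0 < m" "m < n" "r < n" "0 \<le> u" "u \<le> pi"
  shows "vp_q n m r (cos u) =
           (\<Sum>k=1..n. vp_q n m r (cheb_node n k) * vallee_poussin_kernel (n - m) (n + m) u (cheb_angle n k)) / real n"
proof -
  have "(\<Sum>k=1..n. vp_q n m r (cheb_node n k) * vallee_poussin_kernel (n - m) (n + m) u (cheb_angle n k))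
      = (\<Sum>k=1..n. cheb_p r (cheb_node n k) * (pi * (\<Sum>r'<n. vp_q n m r' (cos u) * cheb_p r' (cheb_node n k))))"
    using assms by (intro sum.cong refl) (simp add: vp_q_cheb_node vallee_poussin_kernel_cheb_node)
  also have "\<dots> = pi * (\<Sum>r'<n. vp_q n m r' (cos u) * (\<Sum>k=1..n. cheb_p r (cheb_node n k) * cheb_p r' (cheb_node n k)))"
    unfolding sum_distrib_left by (subst sum.swap) (simp add: mult_ac)
  also have "\<dots> = pi * (\<Sum>r'<n. vp_q n m r' (cos u) * (if r = r' then real n / pi else 0))"
  proof (intro arg_cong[where f = "\<lambda>t. pi * t"] sum.cong refl)
    fix r' assume "r' \<in> {..<n}"
    then show "vp_q n m r' (cos u) * (\<Sum>k=1..n. cheb_p r (cheb_node n k) * cheb_p r' (cheb_node n k)) =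
        vp_q n m r' (cos u) * (if r = r' then real n / pi else 0)"
      using assms(3) by (subst sum_cheb_p_mult_cheb_p_cheb_node) auto
  qed
  also have "\<dots> = real n * vp_q n m r (cos u)"
    using assms(3) by (simp add: if_distrib[of "\<lambda>t. _ * t"] sum.delta cong: if_cong)
  finally show ?thesis using assms by simp
qed

lemma sum_mult_interpolation:
  fixes g :: "'i \<Rightarrow> 'j \<Rightarrow> 'a::field"
  assumes "\<And>i. i \<in> I \<Longrightarrow> f i = (\<Sum>j\<in>J. g i j * h j) / N"
  shows "(\<Sum>i\<in>I. a i * f i) = (\<Sum>j\<in>J. (\<Sum>i\<in>I. a i * g i j) * h j) / N"
proof -
  have "(\<Sum>i\<in>I. a i * f i) = (\<Sum>i\<in>I. (\<Sum>j\<in>J. a i * g i j * h j) / N)"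
    using assms by (intro sum.cong refl) (simp add: sum_distrib_left sum_divide_distrib mult.assoc)
  also have "\<dots> = (\<Sum>i\<in>I. \<Sum>j\<in>J. a i * g i j * h j) / N"
    by (rule sum_divide_distrib[symmetric])
  also have "\<dots> = (\<Sum>j\<in>J. \<Sum>i\<in>I. a i * g i j * h j) / N"
    by (subst sum.swap) (rule refl)
  finally show ?thesis by (simp add: sum_distrib_right)
qed

lemma vp_s_cos_interpolation:
  assumes "0 < m" "m < n" "0 \<le> u" "u \<le> pi"
  shows "vp_s n m x (cos u) =
           (\<Sum>k=1..n. vp_s n m x (cheb_node n k) * vallee_poussin_kernel (n - m) (n + m) u (cheb_angle n k)) / real n"
proof -
  have "vp_phi n m i (cos u) =
      (\<Sum>k=1..n. vp_phi n m i (cheb_node n k) * vallee_poussin_kernel (n - m) (n + m) u (cheb_angle n k)) / real n" for i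
    unfolding vp_phi_def by (rule sum_mult_interpolation) (use assms vp_q_cos_interpolation in auto)
  then show ?thesis
    unfolding vp_s_def by (rule sum_mult_interpolation)
qed

section \<open>Comparison of the two Lebesgue-type functions\<close>

lemma cos_image_0_pi: "cos ` {0..pi} = {-1..1}"
proof safe
  fix y :: real assume "y \<in> {-1..1}"
  then show "y \<in> cos ` {0..pi}"
    using arccos_lbound arccos_ubound by (intro image_eqI[where x = "arccos y"]) auto
qed auto

lemma integral_cheb_w_eq_integral_cos:
  assumes "continuous_on {-1..1} g"
  shows "integral {-1..1} (\<lambda>y. g y * cheb_w y) = integral {0..pi} (\<lambda>u. g (cos u))"
proof -
  define h where "h = (\<lambda>u. \<bar>- sin u\<bar> * (g (cos u) * cheb_w (cos u)))"
  define b where "b = integral {0..pi} (\<lambda>u. g (cos u))"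
  have ends: "negligible {0, pi}" by simp
  have h_eq: "h u = g (cos u)" if "u \<in> {0..pi} - {0, pi}" for u
  proof -
    have "0 < sin u" using that by (intro sin_gt_zero) auto
    moreover have "1 - (cos u)\<^sup>2 = (sin u)\<^sup>2" by (simp add: sin_squared_eq)
    ultimately show ?thesis by (simp add: h_def cheb_w_def)
  qed
  have cont: "continuous_on {0..pi} (\<lambda>u. g (cos u))"
    by (rule continuous_on_compose2[OF assms]) (auto intro: continuous_intros)
  have "h absolutely_integrable_on {0..pi}"
    by (rule absolutely_integrable_spike[OF absolutely_integrable_continuous_real[OF cont] ends])
       (use h_eq in auto)
  moreover have "integral {0..pi} h = b"
    unfolding b_def by (rule integral_spike[OF ends]) (use h_eq in auto)
  moreover have "h absolutely_integrable_on {0..pi} \<and> integral {0..pi} h = b \<longleftrightarrow>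
      (\<lambda>y. g y * cheb_w y) absolutely_integrable_on cos ` {0..pi} \<and>
      integral (cos ` {0..pi}) (\<lambda>y. g y * cheb_w y) = b"
    unfolding h_def
  proof (rule has_absolute_integral_change_of_variables_1')
    show "inj_on cos {0..pi}" by (rule inj_onI) (use cos_inj_pi in auto)
  qed (auto intro: DERIV_cos[THEN has_field_derivative_at_within])
  ultimately show ?thesis by (simp add: b_def cos_image_0_pi)
qed

lemma continuous_on_cheb_p: "continuous_on {-1..1} (cheb_p r)"
  unfolding cheb_p_def by (cases "r = 0") (auto intro!: continuous_intros)

lemma continuous_on_vp_s: "continuous_on {-1..1} (vp_s n m x)"
proof -
  have "continuous_on {-1..1} (vp_q n m r)" for r
    unfolding vp_q_def by (cases "r \<le> n - m") (auto intro!: continuous_intros continuous_on_cheb_p)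
  then show ?thesis
    unfolding vp_s_def vp_phi_def by (intro continuous_intros)
qed

lemma vp_lambda_eq_integral_cos: "vp_lambda n m x = integral {0..pi} (\<lambda>u. \<bar>vp_s n m x (cos u)\<bar>)"
  unfolding vp_lambda_def
  by (rule integral_cheb_w_eq_integral_cos[where g = "\<lambda>y. \<bar>vp_s n m x y\<bar>", simplified])
     (intro continuous_intros continuous_on_vp_s)

lemma vp_lambda_tilde_eq: "vp_lambda_tilde n m x = pi / real n * (\<Sum>k=1..n. \<bar>vp_s n m x (cheb_node n k)\<bar>)"
  unfolding vp_lambda_tilde_def vp_s_def by (simp add: mult.commute)

lemma vp_lambda_nonneg: "0 \<le> vp_lambda n m x"
  unfolding vp_lambda_eq_integral_cos
  by (intro integral_nonneg integrable_continuous_interval continuous_intros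
        continuous_on_compose2[OF continuous_on_vp_s]) auto

lemma vp_lambda_tilde_nonneg: "0 \<le> vp_lambda_tilde n m x"
  by (simp add: vp_lambda_tilde_def)

lemma vp_lambda_le:
  assumes "0 < m" "m < n"
  shows "vp_lambda n m x \<le> real n / real m * vp_lambda_tilde n m x"
proof -
  define c where "c k = vp_s n m x (cheb_node n k)" for k
  have interp: "\<bar>vp_s n m x (cos u)\<bar> =
      \<bar>\<Sum>k=1..n. c k * vallee_poussin_kernel (n - m) (n + m) u (cheb_angle n k)\<bar> / real n"
    if "u \<in> {0..pi}" for u
    using vp_s_cos_interpolation[OF assms, of u x] that by (simp add: c_def)
  have "vp_lambda n m x =
      integral {0..pi} (\<lambda>u. \<bar>\<Sum>k=1..n. c k * vallee_poussin_kernel (n - m) (n + m) u (cheb_angle n k)\<bar> / real n)"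
    unfolding vp_lambda_eq_integral_cos by (rule integral_cong) (rule interp)
  also have "\<dots> =
      integral {0..pi} (\<lambda>u. \<bar>\<Sum>k=1..n. c k * vallee_poussin_kernel (n - m) (n + m) u (cheb_angle n k)\<bar>) / real n"
    by (rule integral_divide)
  also have "\<dots> \<le> pi * (real (n + m) + real (n - m)) / (real (n + m) - real (n - m))
                    * (\<Sum>k=1..n. \<bar>c k\<bar>) / real n"
    using assms by (intro divide_right_mono integral_abs_sum_vallee_poussin_kernel_le) auto
  also have "\<dots> = real n / real m * vp_lambda_tilde n m x"
    using assms by (simp add: vp_lambda_tilde_eq c_def of_nat_diff field_simps)
  finally show ?thesis .
qed

lemma vp_lambda_tilde_le:
  assumes "0 < m" "m < n"
  shows "vp_lambda_tilde n m x \<le> (3 * real n + real m) / (real n - real m) * vp_lambda n m x"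
proof -
  define c where "c k = vp_s n m x (cheb_node n k)" for k
  define b where "b r = (\<Sum>k=1..n. c k * vallee_poussin_coeff (n - m) (n + m) r
                           * neumann_factor r * cos (real r * cheb_angle n k)) / real n" for r
  define P where "P u = (\<Sum>r<n + m. b r * cos (real r * u))" for u
  have interp: "vp_s n m x (cos u) = P u" if "u \<in> {0..pi}" for u
  proof -
    have "vp_s n m x (cos u) =
        (\<Sum>k=1..n. c k * vallee_poussin_kernel (n - m) (n + m) u (cheb_angle n k)) / real n"
      using vp_s_cos_interpolation[OF assms, of u x] that by (simp add: c_def)
    also have "\<dots> = P u"
      unfolding vallee_poussin_kernel_def sum_cos_kernel_eq_cos_poly sum_divide_distrib
      by (simp only: P_def b_def times_divide_eq_left)
    finally show ?thesis .
  qed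
  have nodes: "vp_s n m x (cheb_node n k) = P (cheb_angle n k)" if "k \<in> {1..n}" for k
    using interp[of "cheb_angle n k"] cheb_angle_bounds[of k n] that by (simp add: cheb_node_eq_cos)
  have "pi * (\<Sum>k=1..n. \<bar>P (cheb_angle n k)\<bar>) \<le>
      real n * (real (2 * n) + real (n + m)) / (real (2 * n) - real (n + m)) * integral {0..pi} (\<lambda>u. \<bar>P u\<bar>)"
    unfolding P_def using assms by (intro sum_abs_cos_poly_cheb_angle_le) auto
  moreover have "integral {0..pi} (\<lambda>u. \<bar>P u\<bar>) = vp_lambda n m x"
    unfolding vp_lambda_eq_integral_cos by (rule integral_cong) (simp add: interp)
  ultimately have "pi * (\<Sum>k=1..n. \<bar>vp_s n m x (cheb_node n k)\<bar>) \<le>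
      real n * ((3 * real n + real m) / (real n - real m)) * vp_lambda n m x"
    by (simp add: nodes c_def)
  then show ?thesis
    using assms by (simp add: vp_lambda_tilde_eq field_simps)
qed

lemma floor_mult_ratio_bounds:
  fixes \<theta> :: real
  assumes "0 < \<theta>" "\<theta> < 1" "m = nat \<lfloor>\<theta> * real n\<rfloor>" "1 \<le> m"
  shows "m < n" "real n / real m \<le> 2 / \<theta>"
    "(3 * real n + real m) / (real n - real m) \<le> 4 / (1 - \<theta>)"
proof -
  have floor: "real m = of_int \<lfloor>\<theta> * real n\<rfloor>" using assms(3,4) by simp
  have m_le: "real m \<le> \<theta> * real n" unfolding floor by (rule of_int_floor_le)
  have m_gt: "\<theta> * real n < real m + 1" unfolding floor by (rule real_of_int_floor_add_one_gt)
  have "0 < \<theta> * real n" using m_le assms(4) by linarith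
  then have "0 < real n" using assms(1) by (simp add: zero_less_mult_iff)
  then have "\<theta> * real n < 1 * real n" by (rule mult_strict_right_mono[OF assms(2)])
  then have "real m < real n" using m_le by linarith
  then show "m < n" by simp
  have "1 \<le> real m" using assms(4) by simp
  then have "\<theta> * real n \<le> 2 * real m" using m_gt by linarith
  then show "real n / real m \<le> 2 / \<theta>"
    using assms(1) \<open>1 \<le> real m\<close> by (simp add: field_simps)
  have "real m * (5 - \<theta>) \<le> \<theta> * real n * (5 - \<theta>)"
    using m_le assms by (intro mult_right_mono) auto
  moreover have "0 \<le> real n * ((1 - \<theta>) * (1 - \<theta>))" by simp
  ultimately have "(3 * real n + real m) * (1 - \<theta>) \<le> 4 * (real n - real m)"
    by (simp add: algebra_simps)
  then show "(3 * real n + real m) / (real n - real m) \<le> 4 / (1 - \<theta>)"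
    using assms(2) \<open>real m < real n\<close> by (simp add: field_simps)
qed

theorem theorem2:
  fixes \<theta> :: real
  assumes "0 < \<theta>" and "\<theta> < 1"
  shows "\<exists>C1 C2. C1 > 0 \<and> C2 > 0 \<and>
    (\<forall>(n::nat) (m::nat) (x::real). m = nat \<lfloor>\<theta> * real n\<rfloor> \<longrightarrow> m \<ge> 1 \<longrightarrow> \<bar>x\<bar> \<le> 1 \<longrightarrow>
       C1 * vp_lambda n m x \<le> vp_lambda_tilde n m x \<and>
       vp_lambda_tilde n m x \<le> C2 * vp_lambda n m x)"
proof (intro exI conjI allI impI)
  show "0 < \<theta> / 2" "0 < 4 / (1 - \<theta>)" using assms by simp_all
  fix n m :: nat and x :: real
  \<comment> \<open>The bounds hold for every real x.\<close>
  assume "m = nat \<lfloor>\<theta> * real n\<rfloor>" "1 \<le> m"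
  note ratio = floor_mult_ratio_bounds[OF assms this]
  have m: "0 < m" "m < n" using \<open>1 \<le> m\<close> ratio(1) by simp_all
  have "vp_lambda n m x \<le> 2 / \<theta> * vp_lambda_tilde n m x"
    using vp_lambda_le[OF m, of x] mult_right_mono[OF ratio(2) vp_lambda_tilde_nonneg[of n m x]] by linarith
  then show "\<theta> / 2 * vp_lambda n m x \<le> vp_lambda_tilde n m x"
    using assms by (simp add: field_simps)
  show "vp_lambda_tilde n m x \<le> 4 / (1 - \<theta>) * vp_lambda n m x"
    using vp_lambda_tilde_le[OF m, of x] mult_right_mono[OF ratio(3) vp_lambda_nonneg[of n m x]] by linarith
qed

end
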